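(* Let $C_{n_1},C_{n_2},\dots,C_{n_k}$ be any finite sequence of nested commutators, where $C_{n_j}$ is a grade-$n_j$ commutator $[U_{n_j},[U_{n_j-1},\dots,[U_2,U_1]\dots]]$ with each $U_i$ equal to $h\partial_x^2$ or $h^{-1}V(x)$ ($V$ smooth), and let $O_q=y_q(x)h^q\partial_x^q$ with $y_q$ smooth. Define $$W_k=[C_{n_k},[C_{n_{k-1}},\dots,[C_{n_1},O_q]\dots]].$$ Then $\mathrm{ht}(W_k)\le\mathrm{wd}(W_k)$.
   Context: $\mathcal{L}_h$ is the set of differential operators $\sum_{k=0}^n y_k(x)h^{m_k}\partial_x^{d_k}$ ($n,d_k\in\mathbb{N}$, $m_k\in\mathbb{Z}$, $y_k$ smooth). For $P\in\mathcal{L}_h$: $\mathrm{ht}(P)=\max\{d: h^m\partial_x^d\text{ appears in }P\}$, $\mathrm{wd}(P)=\min\{m: h^m\partial_x^d\text{ appears in }P\}$, with $\mathrm{ht}(0)=0$, $\mathrm{wd}(0)=\infty$. *)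

theory Defs
  imports "HOL-Analysis.Analysis"
begin

(* An operator in L_h is represented by its coefficient table:
   P m d is the smooth coefficient function y(x) of the monomial h^m \<partial>_x^d. *)
type_synonym hop = "int \<Rightarrow> nat \<Rightarrow> real \<Rightarrow> real"

definition smooth :: "(real \<Rightarrow> real) \<Rightarrow> bool" where
  "smooth f \<longleftrightarrow> (\<forall>k. (deriv ^^ k) f differentiable_on UNIV)"

definition supp :: "hop \<Rightarrow> (int \<times> nat) set" where
  "supp P = {(m, d). P m d \<noteq> (\<lambda>_. 0)}"

definition valid :: "hop \<Rightarrow> bool" where
  "valid P \<longleftrightarrow> finite (supp P) \<and> (\<forall>m d. smooth (P m d))"

definition mono :: "(real \<Rightarrow> real) \<Rightarrow> int \<Rightarrow> nat \<Rightarrow> hop" where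
  "mono y m d = (\<lambda>m' d'. if m' = m \<and> d' = d then y else (\<lambda>_. 0))"

definition zero_op :: hop where "zero_op = (\<lambda>_ _ _. 0)"

(* composition of differential operators (Leibniz rule):
   (y h^m1 \<partial>^d1)(z h^m2 \<partial>^d2) = h^(m1+m2) \<Sum>_{j\<le>d1} (d1 choose j) y z^(j) \<partial>^(d1-j+d2) *)
definition comp :: "hop \<Rightarrow> hop \<Rightarrow> hop" where
  "comp P Q = (\<lambda>m e x.
     \<Sum>(m1, d1)\<in>supp P. \<Sum>(m2, d2)\<in>supp Q. \<Sum>j\<in>{..d1}.
       if m1 + m2 = m \<and> d1 - j + d2 = e
       then of_nat (d1 choose j) * P m1 d1 x * (deriv ^^ j) (Q m2 d2) x else 0)"

definition comm :: "hop \<Rightarrow> hop \<Rightarrow> hop" where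
  "comm P Q = (\<lambda>m d x. comp P Q m d x - comp Q P m d x)"

definition ht :: "hop \<Rightarrow> nat" where
  "ht P = (if supp P = {} then 0 else Max (snd ` supp P))"

definition wd :: "hop \<Rightarrow> ereal" where
  "wd P = (if supp P = {} then \<infinity> else ereal (of_int (Min (fst ` supp P))))"

fun nest :: "hop list \<Rightarrow> hop" where
  "nest [] = zero_op"
| "nest [u] = u"
| "nest (u # us) = comm u (nest us)"

definition hD2 :: hop where "hD2 = mono (\<lambda>_. 1) 1 2"
definition hinvV :: "(real \<Rightarrow> real) \<Rightarrow> hop" where
  "hinvV V = mono V (-1) 0"
definition Oq :: "(real \<Rightarrow> real) \<Rightarrow> nat \<Rightarrow> hop" where
  "Oq y q = mono y (int q) q"

end

theory Submission
  imports Defs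
begin

text \<open>
  By the Leibniz rule, the product of two monomials is the product of their coefficients
  followed by terms of strictly lower order; in a commutator the product terms cancel. So every
  monomial \<open>h^m \<partial>^d\<close> of \<open>[P, Q]\<close> comes from monomials \<open>h^m1 \<partial>^d1\<close> of \<open>P\<close> and
  \<open>h^m2 \<partial>^d2\<close> of \<open>Q\<close> with \<open>m = m1 + m2\<close> and \<open>d < d1 + d2\<close>. Call \<open>P\<close> h-homogeneous of
  weight \<open>M\<close> and excess \<open>c\<close> if all its monomials have \<open>m = M\<close> and \<open>d \<le> M + c\<close>; then
  commutators add weights and add excesses minus one. Both generators \<open>h \<partial>^2\<close> and \<open>h^-1 V\<close>
  have excess 1, hence so has every nested commutator of them, while \<open>O_q\<close> has excess 0.
  Bracketing with a nested commutator therefore keeps the excess at 0, and an h-homogeneous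
  operator of excess 0 satisfies \<open>ht \<le> wd\<close>.
\<close>

definition comp_principal :: "hop \<Rightarrow> hop \<Rightarrow> hop" where
  "comp_principal P Q m e x = (\<Sum>(m1, d1)\<in>supp P. \<Sum>(m2, d2)\<in>supp Q.
     if m1 + m2 = m \<and> d1 + d2 = e then P m1 d1 x * Q m2 d2 x else 0)"

definition comp_lower :: "hop \<Rightarrow> hop \<Rightarrow> hop" where
  "comp_lower P Q m e x = (\<Sum>(m1, d1)\<in>supp P. \<Sum>(m2, d2)\<in>supp Q. \<Sum>j\<in>{1..d1}.
     if m1 + m2 = m \<and> d1 - j + d2 = e
     then of_nat (d1 choose j) * P m1 d1 x * (deriv ^^ j) (Q m2 d2) x else 0)"

lemma comp_eq_principal_plus_lower:
  "comp P Q m e x = comp_principal P Q m e x + comp_lower P Q m e x"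
proof -
  have "{..d} = insert 0 {1..d}" for d :: nat by auto
  then show ?thesis
    unfolding comp_def comp_principal_def comp_lower_def split_def
    by (simp add: sum.distrib del: binomial_n_0 funpow_0) (intro sum.cong refl, simp)
qed

lemma comp_principal_commute: "comp_principal P Q = comp_principal Q P"
  unfolding comp_principal_def split_def
  by (intro ext, subst sum.swap) (intro sum.cong refl, simp add: ac_simps conj_commute)

lemma comm_eq_lower: "comm P Q m e x = comp_lower P Q m e x - comp_lower Q P m e x"
  unfolding comm_def comp_eq_principal_plus_lower by (simp add: comp_principal_commute[of P Q])

lemma comp_lower_eq_0:
  assumes "\<And>m1 d1 m2 d2. (m1, d1) \<in> supp P \<Longrightarrow> (m2, d2) \<in> supp Q \<Longrightarrow> m = m1 + m2
             \<Longrightarrow> d1 + d2 \<le> e"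
  shows "comp_lower P Q m e x = 0"
  unfolding comp_lower_def
  by (auto intro!: sum.neutral) (frule (2) assms, simp)

lemma supp_comm:
  assumes "(m, e) \<in> supp (comm P Q)"
  shows "\<exists>m1 d1 m2 d2. (m1, d1) \<in> supp P \<and> (m2, d2) \<in> supp Q \<and> m = m1 + m2 \<and> e < d1 + d2"
proof (rule ccontr)
  assume none: "\<not> ?thesis"
  have "comp_lower P Q m e x = 0" for x
    using none by (intro comp_lower_eq_0) force
  moreover have "comp_lower Q P m e x = 0" for x
    using none by (intro comp_lower_eq_0) (force simp: add.commute)
  ultimately have "comm P Q m e = (\<lambda>_. 0)"
    by (intro ext) (simp add: comm_eq_lower)
  with assms show False
    unfolding supp_def by simp
qed

definition h_homogeneous :: "hop \<Rightarrow> int \<Rightarrow> int \<Rightarrow> bool" where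
  "h_homogeneous P M c \<longleftrightarrow> (\<forall>(m, d)\<in>supp P. m = M \<and> int d \<le> M + c)"

lemma h_homogeneous_comm:
  assumes "h_homogeneous P M1 c1" and "h_homogeneous Q M2 c2"
  shows "h_homogeneous (comm P Q) (M1 + M2) (c1 + c2 - 1)"
  unfolding h_homogeneous_def
proof (intro ballI, clarify)
  fix m d assume "(m, d) \<in> supp (comm P Q)"
  then obtain m1 d1 m2 d2 where
    "(m1, d1) \<in> supp P" "(m2, d2) \<in> supp Q" "m = m1 + m2" "d < d1 + d2"
    using supp_comm by blast
  with assms show "m = M1 + M2 \<and> int d \<le> M1 + M2 + (c1 + c2 - 1)"
    unfolding h_homogeneous_def by fastforce
qed

lemma h_homogeneous_mono: "int d \<le> m + c \<Longrightarrow> h_homogeneous (mono y m d) m c"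
  unfolding h_homogeneous_def supp_def mono_def by auto

lemma h_homogeneous_zero_op: "h_homogeneous zero_op M c"
  unfolding h_homogeneous_def supp_def zero_op_def by auto

lemma h_homogeneous_hD2: "h_homogeneous hD2 1 1"
  unfolding hD2_def by (simp add: h_homogeneous_mono)

lemma h_homogeneous_hinvV: "h_homogeneous (hinvV V) (-1) 1"
  unfolding hinvV_def by (simp add: h_homogeneous_mono)

lemma h_homogeneous_nest:
  assumes "\<forall>u\<in>set us. \<exists>M. h_homogeneous u M 1"
  shows "\<exists>M. h_homogeneous (nest us) M 1"
  using assms
proof (induction us rule: nest.induct)
  case 1
  then show ?case using h_homogeneous_zero_op by simp
next
  case (2 u)
  then show ?case by simp
next
  case (3 u v vs)
  then obtain Mu M where "h_homogeneous u Mu 1" "h_homogeneous (nest (v # vs)) M 1"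
    by auto
  then show ?case using h_homogeneous_comm by fastforce
qed

lemma h_homogeneous_foldr_comm:
  assumes "h_homogeneous W M c" and "\<forall>C\<in>set Cs. \<exists>M'. h_homogeneous C M' 1"
  shows "\<exists>M'. h_homogeneous (foldr comm Cs W) M' c"
  using assms(2)
proof (induction Cs)
  case Nil
  then show ?case using assms(1) by auto
next
  case (Cons C Cs)
  then obtain M1 M2 where "h_homogeneous C M1 1" "h_homogeneous (foldr comm Cs W) M2 c"
    by auto
  then show ?case using h_homogeneous_comm by fastforce
qed

lemma ht_le_wd_plus_excess:
  assumes "h_homogeneous P M c"
  shows "ereal (real (ht P)) \<le> wd P + ereal (of_int c)"
proof (cases "supp P = {}")
  case True
  then show ?thesis unfolding ht_def wd_def by simp
next
  case False
  have supp_sub: "supp P \<subseteq> {M} \<times> {0..nat (M + c)}"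
    using assms unfolding h_homogeneous_def by fastforce
  then have "fst ` supp P = {M}"
    using False by (force simp: image_iff)
  then have wd_eq: "wd P = ereal (of_int M)"
    unfolding wd_def using False by simp
  have "finite (supp P)"
    using supp_sub by (rule finite_subset) auto
  then have "ht P \<in> snd ` supp P"
    using False unfolding ht_def by (simp add: Max_in)
  then have "int (ht P) \<le> M + c"
    using assms unfolding h_homogeneous_def by fastforce
  then show ?thesis
    unfolding wd_eq by simp
qed

theorem theorem4p3:
  fixes V y :: "real \<Rightarrow> real" and q :: nat and Cs :: "hop list list"
  assumes "smooth V" and "smooth y"
    and "\<forall>us\<in>set Cs. length us \<ge> 2 \<and> set us \<subseteq> {hD2, hinvV V}"
  shows "ereal (real (ht (foldr (\<lambda>us W. comm (nest us) W) Cs (Oq y q))))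
           \<le> wd (foldr (\<lambda>us W. comm (nest us) W) Cs (Oq y q))"
proof -
  have generators: "\<forall>u\<in>{hD2, hinvV V}. \<exists>M. h_homogeneous u M 1"
    using h_homogeneous_hD2 h_homogeneous_hinvV by blast
  have "\<forall>C\<in>set (map nest Cs). \<exists>M. h_homogeneous C M 1"
    using assms(3) generators h_homogeneous_nest by fastforce
  moreover have "h_homogeneous (Oq y q) (int q) 0"
    unfolding Oq_def by (rule h_homogeneous_mono) simp
  ultimately obtain M where "h_homogeneous (foldr comm (map nest Cs) (Oq y q)) M 0"
    using h_homogeneous_foldr_comm by blast
  then have "ereal (real (ht (foldr comm (map nest Cs) (Oq y q))))
      \<le> wd (foldr comm (map nest Cs) (Oq y q)) + ereal (of_int 0)"
    by (rule ht_le_wd_plus_excess)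
  then show ?thesis
    by (simp add: foldr_map o_def zero_ereal_def[symmetric])
qed

end
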